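(* Let $G$ be a finite solvable group, $N$ a normal subgroup of $G$, $a\in G$, and $C=\mathbf{C}_G(a)$. Write $\bar G=G/N$ and $\bar g=gN$ for $g\in G$, and set $C_N=\{g\in G\mid [a,g]\in N\}$. Then $C_N$ is a subgroup of $G$ containing $CN$, $C_N/N=\mathbf{C}_{\bar G}(\bar a)$, and $$\eta\big(\bar a^{\bar G}(\bar a^{-1})^{\bar G}\big)+\eta\big((a^{C_N}(a^{-1})^{C_N})^G\big)-1\le \eta\big(a^G(a^{-1})^G\big).$$
   Context: $x^g=g^{-1}xg$ and $[x,g]=x^{-1}g^{-1}xg$. For a subgroup $K$ and element $x$, $x^K=\{x^k\mid k\in K\}$; products of sets are $XY=\{xy\mid x\in X,y\in Y\}$; for a subset $X\subseteq G$, $X^G=\bigcup_{g\in G}X^g$ is the smallest $G$-invariant set containing $X$. For a nonempty subset $X$ of a group $L$ that is $L$-invariant, $\eta(X)$ is the number of distinct conjugacy classes of $L$ whose union is $X$ (here $\eta$ of subsets of $G$ counts $G$-classes and $\eta$ of subsets of $\bar G$ counts $\bar G$-classes). *)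

theory Defs
  imports "HOL-Algebra.Algebra"
begin

definition conjg :: "('a, 'b) monoid_scheme \<Rightarrow> 'a \<Rightarrow> 'a \<Rightarrow> 'a" where
  "conjg G x g = inv\<^bsub>G\<^esub> g \<otimes>\<^bsub>G\<^esub> x \<otimes>\<^bsub>G\<^esub> g"

definition commg :: "('a, 'b) monoid_scheme \<Rightarrow> 'a \<Rightarrow> 'a \<Rightarrow> 'a" where
  "commg G x g = inv\<^bsub>G\<^esub> x \<otimes>\<^bsub>G\<^esub> inv\<^bsub>G\<^esub> g \<otimes>\<^bsub>G\<^esub> x \<otimes>\<^bsub>G\<^esub> g"

definition conj_set :: "('a, 'b) monoid_scheme \<Rightarrow> 'a \<Rightarrow> 'a set \<Rightarrow> 'a set" where
  "conj_set G x K = (\<lambda>k. conjg G x k) ` K"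

definition conjcl :: "('a, 'b) monoid_scheme \<Rightarrow> 'a set \<Rightarrow> 'a set" where
  "conjcl G S = {conjg G x g | x g. x \<in> S \<and> g \<in> carrier G}"

definition centralizer :: "('a, 'b) monoid_scheme \<Rightarrow> 'a \<Rightarrow> 'a set" where
  "centralizer G a = {g \<in> carrier G. g \<otimes>\<^bsub>G\<^esub> a = a \<otimes>\<^bsub>G\<^esub> g}"

(* eta(X): number of conjugacy classes of G contained in (whose union is) the G-invariant set X *)
definition eta :: "('a, 'b) monoid_scheme \<Rightarrow> 'a set \<Rightarrow> nat" where
  "eta G S = card {conj_set G x (carrier G) | x. x \<in> S}"

end

theory Submission
  imports Defs
begin

(*
  Put X = a^G (a^-1)^G and Y = (a^CN (a^-1)^CN)^G, a G-invariant subset of X.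
  The quotient map sends the G-classes in X onto the (G/N)-classes in the image of X,
  which is abar^(G/N) (abar^-1)^(G/N) for abar = Na. Modulo N every element of CN
  centralizes the image of a, so all of Y maps to 1: the eta(Y) classes in Y collapse
  to the trivial class, and at most eta(X) - eta(Y) + 1 classes remain.
*)

lemma (in group) conjg_closed [simp]:
  "x \<in> carrier G \<Longrightarrow> g \<in> carrier G \<Longrightarrow> conjg G x g \<in> carrier G"
  unfolding conjg_def by simp

lemma (in group) conjg_mult:
  "\<lbrakk>x \<in> carrier G; y \<in> carrier G; g \<in> carrier G\<rbrakk> \<Longrightarrow>
    conjg G (x \<otimes> y) g = conjg G x g \<otimes> conjg G y g"
  unfolding conjg_def by (simp add: m_assoc) (metis inv_closed inv_solve_left m_closed)

lemma (in group) conjg_conjg: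
  "\<lbrakk>x \<in> carrier G; c \<in> carrier G; g \<in> carrier G\<rbrakk> \<Longrightarrow>
    conjg G (conjg G x c) g = conjg G x (c \<otimes> g)"
  unfolding conjg_def by (simp add: m_assoc inv_mult_group)

lemma (in group) conjg_inv:
  "x \<in> carrier G \<Longrightarrow> g \<in> carrier G \<Longrightarrow> conjg G (inv x) g = inv (conjg G x g)"
  unfolding conjg_def by (simp add: m_assoc inv_mult_group)

lemma (in group) conjg_eq_self:
  "\<lbrakk>x \<in> carrier G; g \<in> carrier G; x \<otimes> g = g \<otimes> x\<rbrakk> \<Longrightarrow> conjg G x g = x"
  unfolding conjg_def by (metis inv_closed inv_solve_left m_assoc m_closed)

lemma (in group) commg_closed [simp]:
  "x \<in> carrier G \<Longrightarrow> g \<in> carrier G \<Longrightarrow> commg G x g \<in> carrier G"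
  unfolding commg_def by simp

lemma (in group) commg_eq_one_iff:
  assumes x: "x \<in> carrier G" and y: "y \<in> carrier G"
  shows "commg G x y = \<one> \<longleftrightarrow> x \<otimes> y = y \<otimes> x"
proof -
  have "commg G x y = inv (y \<otimes> x) \<otimes> (x \<otimes> y)"
    unfolding commg_def using x y by (simp add: m_assoc inv_mult_group)
  then have "commg G x y = \<one> \<longleftrightarrow> \<one> = inv (y \<otimes> x) \<otimes> (x \<otimes> y)"
    by auto
  also have "\<dots> \<longleftrightarrow> x \<otimes> y = (y \<otimes> x) \<otimes> \<one>"
    using x y by (intro inv_solve_left) simp_all
  finally show ?thesis using x y by simp
qed

lemma (in group) inv_commute:
  assumes x: "x \<in> carrier G" and y: "y \<in> carrier G" and xy: "x \<otimes> y = y \<otimes> x"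
  shows "inv x \<otimes> y = y \<otimes> inv x"
proof -
  have "inv x \<otimes> y = inv x \<otimes> (y \<otimes> x) \<otimes> inv x"
    using x y by (simp add: m_assoc)
  also have "\<dots> = inv x \<otimes> (x \<otimes> y) \<otimes> inv x"
    by (simp only: xy)
  also have "\<dots> = y \<otimes> inv x"
    using x y by (simp add: m_assoc[symmetric])
  finally show ?thesis .
qed

lemma (in group) subgroup_centralizer:
  assumes a: "a \<in> carrier G"
  shows "subgroup (centralizer G a) G"
proof (rule subgroupI)
  fix x y assume "x \<in> centralizer G a" "y \<in> centralizer G a"
  then show "x \<otimes> y \<in> centralizer G a"
    using a unfolding centralizer_def by (simp add: m_assoc) (metis m_assoc)
qed (use a inv_commute in \<open>auto simp: centralizer_def\<close>)

lemma conjcl_singleton: "conjcl G {x} = conj_set G x (carrier G)"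
  unfolding conjcl_def conj_set_def by auto

lemma (in group) conj_set_subset:
  "x \<in> carrier G \<Longrightarrow> K \<subseteq> carrier G \<Longrightarrow> conj_set G x K \<subseteq> carrier G"
  unfolding conj_set_def by auto

lemma (in group) conjcl_conj_set_mult_subset:
  assumes K: "K \<subseteq> carrier G" and a: "a \<in> carrier G" and b: "b \<in> carrier G"
  shows "conjcl G (conj_set G a K <#> conj_set G b K) \<subseteq> conjcl G {a} <#> conjcl G {b}"
proof
  fix y assume "y \<in> conjcl G (conj_set G a K <#> conj_set G b K)"
  then obtain c d g where cd: "c \<in> K" "d \<in> K" and g: "g \<in> carrier G"
    and y: "y = conjg G (conjg G a c \<otimes> conjg G b d) g"
    unfolding conjcl_def set_mult_def conj_set_def by auto
  have "c \<in> carrier G" "d \<in> carrier G"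
    using cd K by auto
  then have "y = conjg G a (c \<otimes> g) \<otimes> conjg G b (d \<otimes> g)"
    using y a b g by (simp add: conjg_mult conjg_conjg)
  moreover have "conjg G a (c \<otimes> g) \<in> conjcl G {a}" "conjg G b (d \<otimes> g) \<in> conjcl G {b}"
    unfolding conjcl_def using cd K g by blast+
  ultimately show "y \<in> conjcl G {a} <#> conjcl G {b}"
    unfolding set_mult_def by blast
qed

lemma (in group_hom) hom_conjg:
  "x \<in> carrier G \<Longrightarrow> g \<in> carrier G \<Longrightarrow> h (conjg G x g) = conjg H (h x) (h g)"
  unfolding conjg_def by simp

lemma (in group_hom) hom_commg:
  "x \<in> carrier G \<Longrightarrow> g \<in> carrier G \<Longrightarrow> h (commg G x g) = commg H (h x) (h g)"
  unfolding commg_def by simp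

lemma (in group_hom) hom_conjg_eq_self:
  "\<lbrakk>x \<in> carrier G; g \<in> carrier G; h g \<in> centralizer H (h x)\<rbrakk> \<Longrightarrow> h (conjg G x g) = h x"
  by (simp add: hom_conjg H.conjg_eq_self centralizer_def)

lemma (in group_hom) image_conj_set:
  assumes surj: "h ` carrier G = carrier H" and x: "x \<in> carrier G"
  shows "h ` conj_set G x (carrier G) = conj_set H (h x) (carrier H)"
  unfolding conj_set_def surj[symmetric] image_image using x by (simp add: hom_conjg)

lemma (in group_hom) subgroup_vimage:
  assumes "subgroup K H"
  shows "subgroup (carrier G \<inter> h -` K) G"
  using assms by (intro G.subgroupI) (auto simp: subgroup_def)

lemma (in group_hom) commg_in_kernel_iff:
  "a \<in> carrier G \<Longrightarrow> g \<in> carrier G \<Longrightarrow>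
    commg G a g \<in> kernel G H h \<longleftrightarrow> h g \<in> centralizer H (h a)"
  by (auto simp: kernel_def hom_commg H.commg_eq_one_iff centralizer_def)

lemma (in group_hom) centralizer_mult_kernel_subset:
  "a \<in> carrier G \<Longrightarrow>
    centralizer G a <#> kernel G H h \<subseteq> carrier G \<inter> h -` centralizer H (h a)"
  by (auto simp: set_mult_def centralizer_def kernel_def) (metis hom_mult)

lemma (in group_hom) conjcl_conj_set_mult_inv_subset_kernel:
  assumes a: "a \<in> carrier G" and K: "K \<subseteq> carrier G"
    and centralizing: "h ` K \<subseteq> centralizer H (h a)"
  shows "conjcl G (conj_set G a K <#> conj_set G (inv a) K) \<subseteq> kernel G H h"
proof
  fix y assume "y \<in> conjcl G (conj_set G a K <#> conj_set G (inv a) K)"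
  then obtain c d g where cd: "c \<in> K" "d \<in> K" and g: "g \<in> carrier G"
    and y: "y = conjg G (conjg G a c \<otimes> conjg G (inv a) d) g"
    unfolding conjcl_def set_mult_def conj_set_def by auto
  have c: "c \<in> carrier G" and d: "d \<in> carrier G"
    using cd K by auto
  have "h (conjg G a c) = h a" "h (conjg G a d) = h a"
    using a c d cd centralizing by (auto intro: hom_conjg_eq_self)
  then have "h (conjg G a c \<otimes> conjg G (inv a) d) = \<one>\<^bsub>H\<^esub>"
    using a c d by (simp add: G.conjg_inv)
  then have "h y = \<one>\<^bsub>H\<^esub>"
    using y a c d g by (simp add: hom_conjg conjg_def)
  then show "y \<in> kernel G H h"
    using y a c d g by (simp add: kernel_def)
qed

definition conj_classes :: "('a, 'b) monoid_scheme \<Rightarrow> 'a set \<Rightarrow> 'a set set" where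
  "conj_classes G S = (\<lambda>x. conj_set G x (carrier G)) ` S"

lemma eta_eq_card_conj_classes: "eta G S = card (conj_classes G S)"
  unfolding eta_def conj_classes_def Setcompr_eq_image ..

lemma (in group_hom) conj_classes_image:
  assumes surj: "h ` carrier G = carrier H" and S: "S \<subseteq> carrier G"
  shows "conj_classes H (h ` S) = (\<lambda>C. h ` C) ` conj_classes G S"
  unfolding conj_classes_def image_image
  by (rule image_cong[OF refl]) (use S image_conj_set[OF surj] in blast)

lemma card_image_collapse:
  assumes A: "finite A" and B: "B \<subseteq> A" and collapse: "f ` B \<subseteq> {c}"
  shows "card (f ` A) + card B \<le> card A + 1"
proof -
  have "f ` A \<subseteq> f ` (A - B) \<union> {c}"
    using collapse by blast
  then have "card (f ` A) \<le> card (f ` (A - B) \<union> {c})"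
    using A by (intro card_mono) auto
  also have "\<dots> \<le> card (f ` (A - B)) + 1"
    using card_Un_le[of "f ` (A - B)" "{c}"] by simp
  also have "\<dots> \<le> card (A - B) + 1"
    using A by (simp add: card_image_le)
  also have "\<dots> = card A - card B + 1"
    using A B by (simp add: card_Diff_subset finite_subset)
  finally show ?thesis
    using A B card_mono[OF A B] by linarith
qed

lemma (in group_hom) eta_image_bound:
  assumes surj: "h ` carrier G = carrier H" and fin: "finite (carrier G)"
    and a: "a \<in> carrier G" and K: "K \<subseteq> carrier G"
    and centralizing: "h ` K \<subseteq> centralizer H (h a)"
  shows "eta H (conjcl H {h a} <#>\<^bsub>H\<^esub> conjcl H {inv\<^bsub>H\<^esub> h a})
      + eta G (conjcl G (conj_set G a K <#> conj_set G (inv a) K))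
    \<le> eta G (conjcl G {a} <#> conjcl G {inv a}) + 1"
proof -
  define S where "S = conjcl G {a} <#> conjcl G {inv a}"
  define T where "T = conjcl G (conj_set G a K <#> conj_set G (inv a) K)"
  have S: "S \<subseteq> carrier G"
    using a by (simp add: S_def conjcl_singleton G.conj_set_subset G.set_mult_closed)
  have TS: "T \<subseteq> S"
    unfolding S_def T_def using K a by (intro G.conjcl_conj_set_mult_subset) auto
  have T_kernel: "T \<subseteq> kernel G H h"
    unfolding T_def using a K centralizing by (rule conjcl_conj_set_mult_inv_subset_kernel)
  have image_S: "h ` S = conjcl H {h a} <#>\<^bsub>H\<^esub> conjcl H {inv\<^bsub>H\<^esub> h a}"
    using a by (simp add: S_def conjcl_singleton G.conj_set_subset set_mult_hom[OF homh]
        image_conj_set[OF surj])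
  have "h ` conj_set G y (carrier G) = conj_set H \<one>\<^bsub>H\<^esub> (carrier H)" if "y \<in> T" for y
  proof -
    have "y \<in> carrier G" "h y = \<one>\<^bsub>H\<^esub>"
      using that T_kernel by (auto simp: kernel_def)
    then show ?thesis
      by (simp add: image_conj_set[OF surj])
  qed
  then have "(\<lambda>C. h ` C) ` conj_classes G T \<subseteq> {conj_set H \<one>\<^bsub>H\<^esub> (carrier H)}"
    by (auto simp: conj_classes_def)
  moreover have "finite (conj_classes G S)"
    unfolding conj_classes_def using S fin by (blast intro: finite_subset)
  moreover have "conj_classes G T \<subseteq> conj_classes G S"
    unfolding conj_classes_def using TS by (rule image_mono)
  ultimately have "eta H (h ` S) + eta G T \<le> eta G S + 1"
    unfolding eta_eq_card_conj_classes conj_classes_image[OF surj S]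
    by (intro card_image_collapse)
  then show ?thesis
    unfolding image_S unfolding S_def T_def .
qed

lemma (in normal) group_hom_r_coset_Mod: "group_hom G (G Mod H) (\<lambda>x. H #> x)"
  by (simp add: group_hom_def group_hom_axioms_def factorgroup_is_group r_coset_hom_Mod)

lemma (in normal) kernel_r_coset_Mod: "kernel G (G Mod H) (\<lambda>x. H #> x) = H"
proof -
  have "H #> x = H \<longleftrightarrow> x \<in> H" if "x \<in> carrier G" for x
    using that coset_join1[of H x] coset_join2[of x H] subgroup_axioms by blast
  then show ?thesis
    using subset by (auto simp: kernel_def)
qed

theorem lemma4p2:
  fixes G (structure) and N :: "'a set" and a :: 'a
  assumes "group G" and "finite (carrier G)" and "solvable G"
    and "N \<lhd> G" and "a \<in> carrier G"
  defines "C \<equiv> centralizer G a"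
    and "CN \<equiv> {g \<in> carrier G. commg G a g \<in> N}"
  shows "subgroup CN G
    \<and> C <#> N \<subseteq> CN
    \<and> (\<lambda>g. N #> g) ` CN = centralizer (G Mod N) (N #> a)
    \<and> int (eta (G Mod N) (conjcl (G Mod N) {N #> a} <#>\<^bsub>G Mod N\<^esub>
                            conjcl (G Mod N) {inv\<^bsub>G Mod N\<^esub> (N #> a)}))
      + int (eta G (conjcl G (conj_set G a CN <#> conj_set G (inv a) CN))) - 1
      \<le> int (eta G (conjcl G {a} <#> conjcl G {inv a}))"
proof -
  interpret normal N G by (rule assms(4))
  interpret quotient: group_hom G "G Mod N" "\<lambda>x. N #> x" by (rule group_hom_r_coset_Mod)
  have CN_vimage: "CN = carrier G \<inter> (\<lambda>x. N #> x) -` centralizer (G Mod N) (N #> a)"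
    using assms(5) quotient.commg_in_kernel_iff by (auto simp: CN_def kernel_r_coset_Mod)
  have surj: "(\<lambda>x. N #> x) ` carrier G = carrier (G Mod N)"
    by (simp add: carrier_FactGroup)
  have "subgroup CN G"
    unfolding CN_vimage using assms(5)
    by (intro quotient.subgroup_vimage quotient.H.subgroup_centralizer) simp
  moreover have "C <#> N \<subseteq> CN"
    using quotient.centralizer_mult_kernel_subset[OF assms(5)]
    by (simp add: C_def CN_vimage kernel_r_coset_Mod)
  moreover have "(\<lambda>g. N #> g) ` CN = centralizer (G Mod N) (N #> a)"
  proof -
    have "centralizer (G Mod N) (N #> a) \<subseteq> (\<lambda>x. N #> x) ` carrier G"
      using surj by (auto simp: centralizer_def)
    then show ?thesis
      unfolding CN_vimage by blast
  qed
  moreover have "eta (G Mod N) (conjcl (G Mod N) {N #> a} <#>\<^bsub>G Mod N\<^esub>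
                            conjcl (G Mod N) {inv\<^bsub>G Mod N\<^esub> (N #> a)})
      + eta G (conjcl G (conj_set G a CN <#> conj_set G (inv a) CN))
    \<le> eta G (conjcl G {a} <#> conjcl G {inv a}) + 1"
    using assms(2,5) by (intro quotient.eta_image_bound surj) (auto simp: CN_vimage)
  ultimately show ?thesis
    by linarith
qed

end
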